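(* Let $p$ be a prime and $h(x)\in\mathbb Z[x]$ with $d:=\deg_p h\ge1$. For every integer $m\ge1$, $$\#\{a\bmod p^m:\ h(a)\equiv0\pmod{p^m}\}\le d\cdot p^{m-\lceil m/d\rceil}.$$
   Context: $\deg_p h$ denotes the degree of the reduction of $h$ modulo $p$. *)

theory Defs
  imports "HOL-Computational_Algebra.Polynomial"
begin

definition deg_mod :: "int \<Rightarrow> int poly \<Rightarrow> nat" where
  "deg_mod p h = degree (map_poly (\<lambda>c. c mod p) h)"

end

theory Submission
  imports Defs
begin

text \<open>Let d = deg_p h and k = ceiling (m / d). If p^t divides h at d + 1 points that are
pairwise incongruent modulo p^k, then t <= d (k - 1): dividing h by x - a0 lowers the degree
modulo p by one and, as p^k does not divide a - a0, costs at most k - 1 factors of p at every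
other point a, while a polynomial of degree 0 modulo p has no value divisible by p. Since
d (k - 1) < m, the roots modulo p^m therefore lie in at most d residue classes modulo p^k, each
of which contains p^(m - k) residues modulo p^m.\<close>

definition has_degree_mod :: "'a::comm_semiring_1 \<Rightarrow> 'a poly \<Rightarrow> nat \<Rightarrow> bool" where
  "has_degree_mod p h d \<longleftrightarrow> \<not> p dvd coeff h d \<and> (\<forall>n>d. p dvd coeff h n)"

lemma has_degree_mod_deg_mod:
  fixes p :: int
  assumes "map_poly (\<lambda>c. c mod p) h \<noteq> 0"
  shows "has_degree_mod p h (deg_mod p h)"
proof -
  define hp where "hp = map_poly (\<lambda>c. c mod p) h"
  have coeff_hp: "coeff hp n = coeff h n mod p" for n
    by (simp add: hp_def coeff_map_poly)
  have "coeff hp (degree hp) \<noteq> 0" "\<forall>n>degree hp. coeff hp n = 0"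
    using assms by (simp_all add: hp_def coeff_eq_0)
  then show ?thesis
    unfolding has_degree_mod_def deg_mod_def hp_def[symmetric]
    by (simp add: dvd_eq_mod_eq_0 flip: coeff_hp)
qed

lemma dvd_poly_if_dvd_coeffs:
  fixes p a :: "'a::comm_semiring_1"
  assumes "\<And>n. p dvd coeff h n"
  shows "p dvd poly h a"
  using assms
proof (induction h)
  case (pCons c q)
  then have "p dvd c" "\<And>n. p dvd coeff q n"
    by (metis coeff_pCons_0, metis coeff_pCons_Suc)
  with pCons.IH show ?case by simp
qed simp

lemma has_degree_mod_0_not_dvd_poly:
  fixes p a :: "'a::comm_ring_1"
  assumes "has_degree_mod p h 0"
  shows "\<not> p dvd poly h a"
proof -
  have "p dvd coeff (h - [:coeff h 0:]) n" for n
    using assms by (cases n) (simp_all add: has_degree_mod_def)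
  then have "p dvd poly (h - [:coeff h 0:]) a"
    by (rule dvd_poly_if_dvd_coeffs)
  moreover have "poly h a = poly (h - [:coeff h 0:]) a + coeff h 0"
    by simp
  ultimately show ?thesis
    using assms unfolding has_degree_mod_def by (metis dvd_add_right_iff)
qed

lemma has_degree_mod_synthetic_div:
  fixes h :: "'a::comm_ring_1 poly"
  assumes "has_degree_mod p h (Suc d)"
  shows "has_degree_mod p (synthetic_div h a) d"
proof -
  define q where "q = synthetic_div h a"
  have coeff_q: "coeff q n = coeff h (Suc n) + a * coeff q (Suc n)" for n
  proof -
    have "coeff h (Suc n) = coeff ([:-a, 1:] * q + [:poly h a:]) (Suc n)"
      unfolding q_def synthetic_div_correct' ..
    then show ?thesis by simp
  qed
  have high: "p dvd coeff q n" if "d < n" for n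
  proof -
    have "n \<le> degree q + n + 1" by simp
    then show ?thesis
      using that
    proof (induction n rule: inc_induct)
      case base
      then show ?case by (simp add: coeff_eq_0)
    next
      case (step n)
      then show ?case
        using assms by (simp add: coeff_q[of n] has_degree_mod_def)
    qed
  qed
  have "\<not> p dvd coeff q d"
    using assms high[of "Suc d"] by (simp add: coeff_q[of d] has_degree_mod_def dvd_add_left_iff)
  with high show ?thesis
    by (simp add: has_degree_mod_def q_def)
qed

lemma prime_power_dvd_mult_cancel:
  fixes p x y :: "'a::factorial_semiring"
  assumes "prime_elem p" "p ^ t dvd x * y" "\<not> p ^ k dvd x"
  shows "p ^ (t - (k - 1)) dvd y"
proof (cases "y = 0")
  case False
  have "x \<noteq> 0" "\<not> is_unit p"
    using assms by (auto simp: prime_elem_def)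
  then have "multiplicity p x < k"
    using assms(3) by (rule multiplicity_lessI)
  moreover have "t \<le> multiplicity p x + multiplicity p y"
    using assms(1,2) \<open>x \<noteq> 0\<close> False \<open>\<not> is_unit p\<close>
    by (simp add: power_dvd_iff_le_multiplicity prime_elem_multiplicity_mult_distrib)
  ultimately show ?thesis
    by (intro multiplicity_dvd') linarith
qed simp

lemma card_incongruent_roots_le:
  fixes p :: "'a::{factorial_semiring, comm_ring_1}" and h :: "'a poly"
  assumes "prime_elem p" "has_degree_mod p h d" "d * (k - 1) < t"
    and "pairwise (\<lambda>x y. \<not> p ^ k dvd x - y) A" "\<forall>a\<in>A. p ^ t dvd poly h a"
  shows "card A \<le> d"
  using assms(2-)
proof (induction d arbitrary: h A t)
  case 0
  have "A = {}"
  proof (rule equals0I)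
    fix a assume "a \<in> A"
    then have "p ^ t dvd poly h a" "0 < t"
      using "0.prems" by auto
    then have "p dvd poly h a"
      by (meson dvd_power dvd_trans)
    with "0.prems"(1) show False
      using has_degree_mod_0_not_dvd_poly by blast
  qed
  then show ?case by simp
next
  case (Suc d)
  show ?case
  proof (cases "A = {}")
    case False
    then obtain a0 where a0: "a0 \<in> A" by blast
    define q where "q = synthetic_div h a0"
    have "card (A - {a0}) \<le> d"
    proof (rule Suc.IH)
      show "has_degree_mod p q d"
        unfolding q_def using Suc.prems(1) by (rule has_degree_mod_synthetic_div)
      show "d * (k - 1) < t - (k - 1)"
        using Suc.prems(2) by simp
      show "pairwise (\<lambda>x y. \<not> p ^ k dvd x - y) (A - {a0})"
        using Suc.prems(3) by (rule pairwise_subset) blast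
      show "\<forall>a\<in>A - {a0}. p ^ (t - (k - 1)) dvd poly q a"
      proof
        fix a assume a: "a \<in> A - {a0}"
        have "poly h a = poly ([:-a0, 1:] * q + [:poly h a0:]) a"
          unfolding q_def synthetic_div_correct' ..
        also have "\<dots> = (a - a0) * poly q a + poly h a0"
          by (simp add: algebra_simps)
        finally have "p ^ t dvd (a - a0) * poly q a"
          using Suc.prems(4) a a0 by (metis DiffD1 dvd_add_left_iff)
        moreover have "\<not> p ^ k dvd a - a0"
          using Suc.prems(3) a a0 by (auto simp: pairwise_def)
        ultimately show "p ^ (t - (k - 1)) dvd poly q a"
          using assms(1) prime_power_dvd_mult_cancel by blast
      qed
    qed
    then show ?thesis
      using a0 by (simp add: card_Diff_singleton_if)
  qed simp
qed

lemma card_image_le_if_inj_on_subsets: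
  assumes "\<And>A. A \<subseteq> S \<Longrightarrow> inj_on f A \<Longrightarrow> card A \<le> n"
  shows "card (f ` S) \<le> n"
proof -
  define R where "R = inv_into S f ` f ` S"
  have "R \<subseteq> S"
    by (auto simp: R_def inv_into_into)
  moreover have "inj_on f R"
    by (auto simp: R_def inj_on_def f_inv_into_f)
  moreover have "card R = card (f ` S)"
    by (simp add: R_def card_image inj_on_inv_into)
  ultimately show ?thesis
    using assms by metis
qed

lemma card_residues_of_roots_le:
  fixes p :: int
  assumes "prime p" "has_degree_mod p h d" "d * (k - 1) < t" "\<forall>a\<in>S. p ^ t dvd poly h a"
  shows "card ((\<lambda>a. a mod p ^ k) ` S) \<le> d"
proof (rule card_image_le_if_inj_on_subsets)
  fix A assume "A \<subseteq> S" "inj_on (\<lambda>a. a mod p ^ k) A"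
  then have "pairwise (\<lambda>x y. \<not> p ^ k dvd x - y) A" "\<forall>a\<in>A. p ^ t dvd poly h a"
    using assms(4) by (auto simp: pairwise_def inj_on_def mod_eq_dvd_iff)
  then show "card A \<le> d"
    using prime_imp_prime_elem[OF assms(1)] assms(2,3) by (intro card_incongruent_roots_le)
qed

lemma card_le_card_image_mult:
  assumes "finite S" "\<And>b. b \<in> f ` S \<Longrightarrow> card {a \<in> S. f a = b} \<le> n"
  shows "card S \<le> card (f ` S) * n"
proof -
  have "card S = (\<Sum>b\<in>f ` S. card {a \<in> S. f a = b})"
    unfolding card_eq_sum by (rule sum.image_gen[OF assms(1)])
  also have "\<dots> \<le> card (f ` S) * n"
    using sum_bounded_above[of "f ` S" _ n] assms(2) by simp
  finally show ?thesis .
qed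

lemma card_residue_class_le:
  fixes M N b :: int
  assumes "0 < M" "S \<subseteq> {0..<M * N}"
  shows "card {a \<in> S. a mod M = b} \<le> nat N"
proof -
  let ?C = "{a \<in> S. a mod M = b}"
  have "inj_on (\<lambda>a. a div M) ?C"
    by (rule inj_onI) (metis (mono_tags) div_mult_mod_eq mem_Collect_eq)
  moreover have "a div M \<in> {0..<N}" if "a \<in> ?C" for a
  proof -
    have "M * (a div M) = a - a mod M"
      by (simp add: minus_mod_eq_mult_div)
    moreover have "0 \<le> a mod M"
      using assms by simp
    ultimately have "M * (a div M) < M * N"
      using that assms(2) by auto
    then show ?thesis
      using assms that by (auto simp: pos_imp_zdiv_nonneg_iff mult_less_cancel_left_pos)
  qed
  ultimately have "card ?C \<le> card {0..<N}"
    by (intro card_inj_on_le) auto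
  then show ?thesis
    by simp
qed

lemma nat_ceiling_divide_bounds:
  fixes m d :: nat
  assumes "0 < d" "0 < m"
  shows "nat \<lceil>real m / real d\<rceil> \<le> m" "d * (nat \<lceil>real m / real d\<rceil> - 1) < m"
proof -
  have "real m / real d \<le> real m"
    using assms(1) by (simp add: divide_le_eq mult_le_cancel_left1)
  then show "nat \<lceil>real m / real d\<rceil> \<le> m"
    by (simp add: ceiling_le_iff nat_le_iff)
  have "0 < real m / real d"
    using assms by simp
  then have "real (nat \<lceil>real m / real d\<rceil> - 1) < real m / real d"
    by linarith
  then show "d * (nat \<lceil>real m / real d\<rceil> - 1) < m"
    using assms(1) by (simp add: less_divide_eq mult.commute flip: of_nat_mult)
qed

theorem proposition2p2:
  fixes p :: int and h :: "int poly" and m :: nat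
  assumes "prime p"
    and "deg_mod p h \<ge> 1"
    and "m \<ge> 1"
  shows "real (card {a \<in> {0..<p ^ m}. p ^ m dvd poly h a})
           \<le> real (deg_mod p h) * real_of_int p ^ (m - nat \<lceil>real m / real (deg_mod p h)\<rceil>)"
proof -
  define d where "d = deg_mod p h"
  define k where "k = nat \<lceil>real m / real d\<rceil>"
  define S where "S = {a \<in> {0..<p ^ m}. p ^ m dvd poly h a}"
  have "p > 0"
    using assms(1) by (rule prime_gt_0_int)
  have "has_degree_mod p h d"
    using assms(2) unfolding d_def by (intro has_degree_mod_deg_mod) (auto simp: deg_mod_def)
  have "k \<le> m" "d * (k - 1) < m"
    using nat_ceiling_divide_bounds assms(2,3) unfolding d_def k_def by auto
  have "finite S"
    unfolding S_def by (rule finite_subset[of _ "{0..<p ^ m}"]) auto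
  have fibres: "card {a \<in> S. a mod p ^ k = b} \<le> nat (p ^ (m - k))" for b
    using \<open>p > 0\<close> \<open>k \<le> m\<close>
    by (intro card_residue_class_le) (auto simp: S_def simp flip: power_add)
  have residues: "card ((\<lambda>a. a mod p ^ k) ` S) \<le> d"
    using assms(1) \<open>has_degree_mod p h d\<close> \<open>d * (k - 1) < m\<close>
    by (rule card_residues_of_roots_le) (simp add: S_def)
  have "card S \<le> card ((\<lambda>a. a mod p ^ k) ` S) * nat (p ^ (m - k))"
    using \<open>finite S\<close> fibres by (rule card_le_card_image_mult)
  also have "\<dots> \<le> d * nat (p ^ (m - k))"
    using residues by (rule mult_le_mono1)
  finally have "card S \<le> d * nat (p ^ (m - k))" .
  then have "real (card S) \<le> real d * real (nat (p ^ (m - k)))"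
    by (simp flip: of_nat_mult)
  also have "real (nat (p ^ (m - k))) = real_of_int p ^ (m - k)"
    using \<open>p > 0\<close> by simp
  finally show ?thesis
    unfolding S_def d_def k_def .
qed

end
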